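(* Let $\mathsf{X}\subset\mathbb{R}^p$ and $\mathsf{Y}\subset\mathbb{R}^q$, and let $\tilde s(x\mid\gamma)$ (a pdf in $x\in\mathsf{X}$ for each $\gamma\in\mathsf{Y}$) and $\tilde h(\gamma\mid x)$ (a pdf in $\gamma\in\mathsf{Y}$ for each $x\in\mathsf{X}$) be conditional densities, and define the Markov transition densities $k(x,x')=\int_{\mathsf{Y}}\tilde s(x'\mid\gamma)\tilde h(\gamma\mid x)d\gamma$ on $\mathsf{X}$ and $\tilde k(\gamma,\gamma')=\int_{\mathsf{X}}\tilde h(\gamma'\mid x)\tilde s(x\mid\gamma)dx$ on $\mathsf{Y}$. Suppose $\int_{\mathsf{X}}V(x')k(x,x')dx'\le\lambda V(x)+L$ for all $x\in\mathsf{X}$, where $V:\mathsf{X}\to[0,\infty)$, $\lambda\in[0,1)$ and $L<\infty$. Let $c$ be a constant such that $\tilde V(\gamma)=\int_{\mathsf{X}}V(x)\tilde s(x\mid\gamma)dx+c$ is finite and non-negative for all $\gamma\in\mathsf{Y}$. Then for all $\gamma\in\mathsf{Y}$, $\int_{\mathsf{Y}}\tilde V(\gamma')\tilde k(\gamma,\gamma')d\gamma'\le\lambda\tilde V(\gamma)+\tilde L$, where $\tilde L=L+c(1-\lambda)$. *)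

theory Defs
  imports "HOL-Analysis.Analysis"
begin

text \<open>Conventions: s x g stands for the conditional density s~(x|g) (x in X, g in Y),
  h g x stands for h~(g|x). Transition densities are nonnegative extended reals.\<close>

definition kX :: "('a::euclidean_space \<Rightarrow> 'b::euclidean_space \<Rightarrow> real) \<Rightarrow> ('b \<Rightarrow> 'a \<Rightarrow> real)
    \<Rightarrow> 'b set \<Rightarrow> 'a \<Rightarrow> 'a \<Rightarrow> ennreal" where
  "kX s h Y x x' = (\<integral>\<^sup>+ g\<in>Y. ennreal (s x' g) * ennreal (h g x) \<partial>lborel)"

definition kY :: "('a::euclidean_space \<Rightarrow> 'b::euclidean_space \<Rightarrow> real) \<Rightarrow> ('b \<Rightarrow> 'a \<Rightarrow> real)
    \<Rightarrow> 'a set \<Rightarrow> 'b \<Rightarrow> 'b \<Rightarrow> ennreal" where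
  "kY s h X g g' = (\<integral>\<^sup>+ x\<in>X. ennreal (h g' x) * ennreal (s x g) \<partial>lborel)"

definition Vtilde :: "('a::euclidean_space \<Rightarrow> real) \<Rightarrow> ('a \<Rightarrow> 'b \<Rightarrow> real) \<Rightarrow> 'a set \<Rightarrow> real
    \<Rightarrow> 'b \<Rightarrow> real" where
  "Vtilde V s X c g = enn2real (\<integral>\<^sup>+ x\<in>X. ennreal (V x) * ennreal (s x g) \<partial>lborel) + c"

end

theory Submission
  imports Defs
begin

(* k is the two-step kernel "draw g from h(.|x), then x' from s(.|g)", and k~ performs the same
   two steps in the opposite order.  Hence, by Tonelli, integrating the s-average of V against
   k~(g,.) is the same as averaging the one-step drift of V under k against s(.|g).  As s(.|g) is a
   probability density, the drift bound averages to lam (Vtilde g - c) + L; as k~(g,.) is also a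
   probability density, the constant c is carried through unchanged. *)

lemma kY_eq_kX: "kY s h X = kX h s X"
  by (simp add: fun_eq_iff kX_def kY_def)

lemma nn_integral_kX:
  fixes s :: "'a::euclidean_space \<Rightarrow> 'b::euclidean_space \<Rightarrow> real" and h :: "'b \<Rightarrow> 'a \<Rightarrow> real"
    and f :: "'a \<Rightarrow> ennreal"
  assumes [measurable]: "(\<lambda>(x, g). s x g) \<in> borel_measurable (lborel \<Otimes>\<^sub>M lborel)"
    "(\<lambda>(g, x). h g x) \<in> borel_measurable (lborel \<Otimes>\<^sub>M lborel)"
    "f \<in> borel_measurable lborel" "X \<in> sets lborel" "Y \<in> sets lborel"
  shows "(\<integral>\<^sup>+x'\<in>X. f x' * kX s h Y x x' \<partial>lborel)
       = (\<integral>\<^sup>+g\<in>Y. ennreal (h g x) * (\<integral>\<^sup>+x'\<in>X. f x' * ennreal (s x' g) \<partial>lborel) \<partial>lborel)"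
proof -
  let ?F = "\<lambda>x' g. f x' * ennreal (s x' g) * indicator X x' * ennreal (h g x) * indicator Y g"
  have "(\<integral>\<^sup>+x'\<in>X. f x' * kX s h Y x x' \<partial>lborel) = (\<integral>\<^sup>+x'. \<integral>\<^sup>+g. ?F x' g \<partial>lborel \<partial>lborel)"
    unfolding kX_def by (auto simp: nn_integral_cmult[symmetric] mult_ac intro!: nn_integral_cong)
  also have "\<dots> = (\<integral>\<^sup>+g. \<integral>\<^sup>+x'. ?F x' g \<partial>lborel \<partial>lborel)"
    by (rule lborel_pair.Fubini') measurable
  also have "\<dots> = (\<integral>\<^sup>+g\<in>Y. ennreal (h g x) * (\<integral>\<^sup>+x'\<in>X. f x' * ennreal (s x' g) \<partial>lborel) \<partial>lborel)"
    by (auto simp: nn_integral_multc[symmetric] nn_integral_cmult[symmetric] mult_ac intro!: nn_integral_cong)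
  finally show ?thesis .
qed

lemma set_nn_integral_kX_eq_1:
  fixes s :: "'a::euclidean_space \<Rightarrow> 'b::euclidean_space \<Rightarrow> real" and h :: "'b \<Rightarrow> 'a \<Rightarrow> real"
  assumes [measurable]: "(\<lambda>(x, g). s x g) \<in> borel_measurable (lborel \<Otimes>\<^sub>M lborel)"
    "(\<lambda>(g, x). h g x) \<in> borel_measurable (lborel \<Otimes>\<^sub>M lborel)" "X \<in> sets lborel" "Y \<in> sets lborel"
    and s_pdf: "\<And>g. g \<in> Y \<Longrightarrow> (\<integral>\<^sup>+x'\<in>X. ennreal (s x' g) \<partial>lborel) = 1"
    and h_pdf: "(\<integral>\<^sup>+g\<in>Y. ennreal (h g x) \<partial>lborel) = 1"
  shows "(\<integral>\<^sup>+x'\<in>X. kX s h Y x x' \<partial>lborel) = 1"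
proof -
  have "(\<integral>\<^sup>+x'\<in>X. kX s h Y x x' \<partial>lborel) = (\<integral>\<^sup>+x'\<in>X. 1 * kX s h Y x x' \<partial>lborel)"
    by simp
  also have "\<dots> = (\<integral>\<^sup>+g\<in>Y. ennreal (h g x) * (\<integral>\<^sup>+x'\<in>X. 1 * ennreal (s x' g) \<partial>lborel) \<partial>lborel)"
    by (rule nn_integral_kX) measurable
  also have "\<dots> = (\<integral>\<^sup>+g\<in>Y. ennreal (h g x) \<partial>lborel)"
    using s_pdf by (auto intro!: nn_integral_cong split: split_indicator)
  finally show ?thesis
    using h_pdf by simp
qed

lemma nn_integral_kY_mixture:
  fixes s :: "'a::euclidean_space \<Rightarrow> 'b::euclidean_space \<Rightarrow> real" and h :: "'b \<Rightarrow> 'a \<Rightarrow> real"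
    and f :: "'a \<Rightarrow> ennreal"
  assumes [measurable]: "(\<lambda>(x, g). s x g) \<in> borel_measurable (lborel \<Otimes>\<^sub>M lborel)"
    "(\<lambda>(g, x). h g x) \<in> borel_measurable (lborel \<Otimes>\<^sub>M lborel)"
    "f \<in> borel_measurable lborel" "X \<in> sets lborel" "Y \<in> sets lborel"
  shows "(\<integral>\<^sup>+g'\<in>Y. (\<integral>\<^sup>+x'\<in>X. f x' * ennreal (s x' g') \<partial>lborel) * kY s h X g g' \<partial>lborel)
       = (\<integral>\<^sup>+x\<in>X. ennreal (s x g) * (\<integral>\<^sup>+x'\<in>X. f x' * kX s h Y x x' \<partial>lborel) \<partial>lborel)"
proof -
  let ?Sf = "\<lambda>g'. \<integral>\<^sup>+x'\<in>X. f x' * ennreal (s x' g') \<partial>lborel"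
  have "(\<integral>\<^sup>+g'\<in>Y. ?Sf g' * kY s h X g g' \<partial>lborel)
      = (\<integral>\<^sup>+x\<in>X. ennreal (s x g) * (\<integral>\<^sup>+g'\<in>Y. ?Sf g' * ennreal (h g' x) \<partial>lborel) \<partial>lborel)"
    unfolding kY_eq_kX by (rule nn_integral_kX) measurable
  also have "\<dots> = (\<integral>\<^sup>+x\<in>X. ennreal (s x g) * (\<integral>\<^sup>+x'\<in>X. f x' * kX s h Y x x' \<partial>lborel) \<partial>lborel)"
    by (simp only: nn_integral_kX[of s h f X Y] mult.commute[of "?Sf _"] assms)
  finally show ?thesis .
qed

lemma set_nn_integral_add_const_prob:
  fixes f :: "'x \<Rightarrow> real" and w :: "'x \<Rightarrow> ennreal"
  assumes [measurable]: "f \<in> borel_measurable M" "w \<in> borel_measurable M" "A \<in> sets M"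
    and mass: "(\<integral>\<^sup>+x\<in>A. w x \<partial>M) = 1"
    and f_nonneg: "\<And>x. x \<in> A \<Longrightarrow> 0 \<le> f x" and fa_nonneg: "\<And>x. x \<in> A \<Longrightarrow> 0 \<le> f x + a"
    and finite: "(\<integral>\<^sup>+x\<in>A. ennreal (f x) * w x \<partial>M) < \<infinity>"
  shows "(\<integral>\<^sup>+x\<in>A. ennreal (f x + a) * w x \<partial>M)
       = ennreal (enn2real (\<integral>\<^sup>+x\<in>A. ennreal (f x) * w x \<partial>M) + a)"
    and "0 \<le> enn2real (\<integral>\<^sup>+x\<in>A. ennreal (f x) * w x \<partial>M) + a"
proof -
  define I where "I = (\<integral>\<^sup>+x\<in>A. ennreal (f x) * w x \<partial>M)"
  have I: "I = ennreal (enn2real I)"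
    using finite by (simp add: I_def less_top)
  have split: "(\<integral>\<^sup>+x\<in>A. ennreal (u x + b) * w x \<partial>M) = (\<integral>\<^sup>+x\<in>A. ennreal (u x) * w x \<partial>M) + ennreal b"
    if [measurable]: "u \<in> borel_measurable M" and "0 \<le> b" and "\<And>x. x \<in> A \<Longrightarrow> 0 \<le> u x" for u b
  proof -
    have "(\<integral>\<^sup>+x\<in>A. ennreal (u x + b) * w x \<partial>M)
        = (\<integral>\<^sup>+x. ennreal (u x) * w x * indicator A x + ennreal b * (w x * indicator A x) \<partial>M)"
      using that by (auto intro!: nn_integral_cong split: split_indicator simp: ennreal_plus distrib_right)
    then show ?thesis
      using mass by (simp add: nn_integral_add nn_integral_cmult)
  qed
  have "(\<integral>\<^sup>+x\<in>A. ennreal (f x + a) * w x \<partial>M) = ennreal (enn2real I + a) \<and> 0 \<le> enn2real I + a"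
  proof (cases "0 \<le> a")
    case True
    then show ?thesis
      using split[of f a] f_nonneg I by (simp add: ennreal_plus flip: I_def)
  next
    case False
    have I_split: "I = (\<integral>\<^sup>+x\<in>A. ennreal (f x + a) * w x \<partial>M) + ennreal (- a)"
      using split[of "\<lambda>x. f x + a" "- a"] False fa_nonneg by (simp add: I_def)
    then have "(\<integral>\<^sup>+x\<in>A. ennreal (f x + a) * w x \<partial>M) = ennreal (enn2real I) - ennreal (- a)"
      using I by (metis ennreal_add_diff_cancel_right ennreal_neq_top)
    moreover have "ennreal (- a) \<le> I"
      by (subst I_split) (rule add_increasing[OF zero_le order_refl])
    then have "- a \<le> enn2real I"
      using enn2real_mono[of "ennreal (- a)" I] finite False by (simp add: I_def)
    ultimately show ?thesis
      using False by (simp add: ennreal_minus)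
  qed
  then show "(\<integral>\<^sup>+x\<in>A. ennreal (f x + a) * w x \<partial>M) = ennreal (enn2real I + a)"
    and "0 \<le> enn2real I + a"
    by auto
qed


lemma set_nn_integral_add_const_le:
  fixes f w :: "'x \<Rightarrow> ennreal"
  assumes [measurable]: "f \<in> borel_measurable M" "w \<in> borel_measurable M" "A \<in> sets M"
    and mass: "(\<integral>\<^sup>+x\<in>A. w x \<partial>M) = 1"
    and f_finite: "\<And>x. x \<in> A \<Longrightarrow> f x < \<infinity>" and fa_nonneg: "\<And>x. x \<in> A \<Longrightarrow> 0 \<le> enn2real (f x) + a"
    and le: "(\<integral>\<^sup>+x\<in>A. f x * w x \<partial>M) \<le> ennreal B" and "0 \<le> B"
  shows "(\<integral>\<^sup>+x\<in>A. ennreal (enn2real (f x) + a) * w x \<partial>M) < \<infinity> \<and>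
         enn2real (\<integral>\<^sup>+x\<in>A. ennreal (enn2real (f x) + a) * w x \<partial>M) \<le> B + a"
proof -
  have f_real: "(\<integral>\<^sup>+x\<in>A. ennreal (enn2real (f x)) * w x \<partial>M) = (\<integral>\<^sup>+x\<in>A. f x * w x \<partial>M)"
    using f_finite by (auto intro!: nn_integral_cong split: split_indicator)
  have "(\<integral>\<^sup>+x\<in>A. ennreal (enn2real (f x)) * w x \<partial>M) < \<infinity>"
    using le by (simp add: f_real le_less_trans)
  moreover have "(\<lambda>x. enn2real (f x)) \<in> borel_measurable M"
    by measurable
  ultimately have shifted: "(\<integral>\<^sup>+x\<in>A. ennreal (enn2real (f x) + a) * w x \<partial>M)
      = ennreal (enn2real (\<integral>\<^sup>+x\<in>A. f x * w x \<partial>M) + a)"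
    "0 \<le> enn2real (\<integral>\<^sup>+x\<in>A. f x * w x \<partial>M) + a"
    using set_nn_integral_add_const_prob[of "\<lambda>x. enn2real (f x)" M w A a] assms(2,3) mass fa_nonneg
    by (simp_all add: f_real)
  have "enn2real (\<integral>\<^sup>+x\<in>A. f x * w x \<partial>M) \<le> B"
    using \<open>0 \<le> B\<close> le by (rule enn2real_leI)
  then show ?thesis
    using shifted by simp
qed

lemma set_nn_integral_affine_bound:
  fixes V :: "'x \<Rightarrow> real" and u w :: "'x \<Rightarrow> ennreal"
  assumes [measurable]: "V \<in> borel_measurable M" "w \<in> borel_measurable M" "A \<in> sets M"
    and mass: "(\<integral>\<^sup>+x\<in>A. w x \<partial>M) = 1" and finite: "(\<integral>\<^sup>+x\<in>A. ennreal (V x) * w x \<partial>M) < \<infinity>"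
    and V_nonneg: "\<And>x. x \<in> A \<Longrightarrow> 0 \<le> V x" and lam: "0 \<le> lam"
    and bound: "\<And>x. x \<in> A \<Longrightarrow> u x \<le> ennreal (lam * V x + b)"
    and bound_nonneg: "\<And>x. x \<in> A \<Longrightarrow> 0 \<le> lam * V x + b"
  shows "(\<integral>\<^sup>+x\<in>A. u x * w x \<partial>M) \<le> ennreal (lam * enn2real (\<integral>\<^sup>+x\<in>A. ennreal (V x) * w x \<partial>M) + b)"
    and "0 \<le> lam * enn2real (\<integral>\<^sup>+x\<in>A. ennreal (V x) * w x \<partial>M) + b"
proof -
  have lam_V: "(\<integral>\<^sup>+x\<in>A. ennreal (lam * V x) * w x \<partial>M) = ennreal lam * (\<integral>\<^sup>+x\<in>A. ennreal (V x) * w x \<partial>M)"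
    using lam V_nonneg
    by (auto simp: ennreal_mult nn_integral_cmult[symmetric] mult_ac
        intro!: nn_integral_cong split: split_indicator)
  then have "(\<integral>\<^sup>+x\<in>A. ennreal (lam * V x) * w x \<partial>M) < \<infinity>"
    using finite by (simp add: ennreal_mult_less_top)
  note shifted = set_nn_integral_add_const_prob[OF _ _ _ mass _ bound_nonneg this]
  have "enn2real (\<integral>\<^sup>+x\<in>A. ennreal (lam * V x) * w x \<partial>M)
      = lam * enn2real (\<integral>\<^sup>+x\<in>A. ennreal (V x) * w x \<partial>M)"
    using lam_V lam by (simp add: enn2real_mult)
  note shifted = shifted[unfolded this]
  have "(\<integral>\<^sup>+x\<in>A. u x * w x \<partial>M) \<le> (\<integral>\<^sup>+x\<in>A. ennreal (lam * V x + b) * w x \<partial>M)"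
    by (intro nn_integral_mono) (auto split: split_indicator intro!: mult_right_mono bound)
  also have "\<dots> = ennreal (lam * enn2real (\<integral>\<^sup>+x\<in>A. ennreal (V x) * w x \<partial>M) + b)"
    by (rule shifted(1)) (use lam V_nonneg in auto)
  finally show "(\<integral>\<^sup>+x\<in>A. u x * w x \<partial>M) \<le> ennreal (lam * enn2real (\<integral>\<^sup>+x\<in>A. ennreal (V x) * w x \<partial>M) + b)" .
  show "0 \<le> lam * enn2real (\<integral>\<^sup>+x\<in>A. ennreal (V x) * w x \<partial>M) + b"
    by (rule shifted(2)) (use lam V_nonneg in auto)
qed

theorem proposition2:
  fixes X :: "'a::euclidean_space set" and Y :: "'b::euclidean_space set"
    and s :: "'a \<Rightarrow> 'b \<Rightarrow> real" and h :: "'b \<Rightarrow> 'a \<Rightarrow> real"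
    and V :: "'a \<Rightarrow> real" and lam L c :: real
  assumes X_meas: "X \<in> sets lborel" and Y_meas: "Y \<in> sets lborel"
    and s_meas: "(\<lambda>(x, g). s x g) \<in> borel_measurable (lborel \<Otimes>\<^sub>M lborel)"
    and h_meas: "(\<lambda>(g, x). h g x) \<in> borel_measurable (lborel \<Otimes>\<^sub>M lborel)"
    and s_nonneg: "\<And>x g. x \<in> X \<Longrightarrow> g \<in> Y \<Longrightarrow> 0 \<le> s x g"
    and s_pdf: "\<And>g. g \<in> Y \<Longrightarrow> (\<integral>\<^sup>+ x\<in>X. ennreal (s x g) \<partial>lborel) = 1"
    and h_nonneg: "\<And>x g. x \<in> X \<Longrightarrow> g \<in> Y \<Longrightarrow> 0 \<le> h g x"
    and h_pdf: "\<And>x. x \<in> X \<Longrightarrow> (\<integral>\<^sup>+ g\<in>Y. ennreal (h g x) \<partial>lborel) = 1"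
    and V_meas: "V \<in> borel_measurable lborel"
    and V_nonneg: "\<And>x. x \<in> X \<Longrightarrow> 0 \<le> V x"
    and lambda: "0 \<le> lam" "lam < 1"
    and drift: "\<And>x. x \<in> X \<Longrightarrow>
        (\<integral>\<^sup>+ x'\<in>X. ennreal (V x') * kX s h Y x x' \<partial>lborel) < \<infinity> \<and>
        enn2real (\<integral>\<^sup>+ x'\<in>X. ennreal (V x') * kX s h Y x x' \<partial>lborel) \<le> lam * V x + L"
    and Vt_finite: "\<And>g. g \<in> Y \<Longrightarrow> (\<integral>\<^sup>+ x\<in>X. ennreal (V x) * ennreal (s x g) \<partial>lborel) < \<infinity>"
    and Vt_nonneg: "\<And>g. g \<in> Y \<Longrightarrow> 0 \<le> Vtilde V s X c g"
    and g: "g \<in> Y"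
  shows "(\<integral>\<^sup>+ g'\<in>Y. ennreal (Vtilde V s X c g') * kY s h X g g' \<partial>lborel) < \<infinity> \<and>
         enn2real (\<integral>\<^sup>+ g'\<in>Y. ennreal (Vtilde V s X c g') * kY s h X g g' \<partial>lborel)
           \<le> lam * Vtilde V s X c g + (L + c * (1 - lam))"
proof -
  note [measurable] = X_meas Y_meas s_meas h_meas V_meas
  define W where "W g' = (\<integral>\<^sup>+x\<in>X. ennreal (V x) * ennreal (s x g') \<partial>lborel)" for g'
  have W_finite: "W g' < \<infinity>" if "g' \<in> Y" for g'
    using Vt_finite[OF that] by (simp add: W_def)
  have Vtilde_W: "Vtilde V s X c g' = enn2real (W g') + c" for g'
    by (simp add: Vtilde_def W_def)
  have kY_mass: "(\<integral>\<^sup>+g'\<in>Y. kY s h X g g' \<partial>lborel) = 1"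
    unfolding kY_eq_kX by (rule set_nn_integral_kX_eq_1[OF h_meas s_meas Y_meas X_meas h_pdf s_pdf[OF g]])
  have drift_ennreal: "(\<integral>\<^sup>+x'\<in>X. ennreal (V x') * kX s h Y x x' \<partial>lborel) \<le> ennreal (lam * V x + L)"
    "0 \<le> lam * V x + L" if "x \<in> X" for x
    using drift[OF that] by (auto intro: enn2real_le order_trans[OF enn2real_nonneg])
  have "(\<lambda>x. ennreal (s x g)) \<in> borel_measurable lborel" "(\<lambda>x. ennreal (V x)) \<in> borel_measurable lborel"
    by measurable
  note drift_averaged = set_nn_integral_affine_bound[OF V_meas this(1) X_meas s_pdf[OF g] Vt_finite[OF g]
      V_nonneg lambda(1) drift_ennreal]
    and mixture = nn_integral_kY_mixture[OF s_meas h_meas this(2) X_meas Y_meas]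
  have W_kY: "(\<integral>\<^sup>+g'\<in>Y. W g' * kY s h X g g' \<partial>lborel) \<le> ennreal (lam * enn2real (W g) + L)"
    and W_kY_nonneg: "0 \<le> lam * enn2real (W g) + L"
    using drift_averaged unfolding W_def mixture by (auto simp: mult.commute[of "ennreal (s _ g)"])
  have "W \<in> borel_measurable lborel" "kY s h X g \<in> borel_measurable lborel"
    unfolding W_def kY_def by measurable
  then show ?thesis
    using set_nn_integral_add_const_le[OF _ _ Y_meas kY_mass W_finite _ W_kY W_kY_nonneg, where a = c] Vt_nonneg
    by (simp add: Vtilde_W algebra_simps)
qed

end
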